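(* Let $0<\epsilon<1$ be fixed. Suppose that Assumption 2 holds and that at least one of Assumption 1.1 and Assumption 1.2 holds. Suppose moreover that for every $C\subseteq V$ with $|C|=r$, \[ \max_{\emptyset\ne D\subseteq C}\frac{\mathbb{E}_0[e(D)]\,h(\rho_C-1)}{|D|\log(n/|D|)}\le1-\epsilon . \] Then for all sufficiently large $n$, for every $C\subseteq V$ with $|C|=r$ and every $D\in\mathcal E_C$, there is a unique number $c_D\ge1$ such that \[ (1+\epsilon)\,\mathbb{E}_0[e(D)]\,h(c_D-1)=|D|\log\frac n{|D|}. \] Moreover, $\theta_{ij}(c_Dp_{ij})\le2\,\theta_{ij}(\rho_Cp_{ij})$ for all $i,j\in D$.
   Context: Setting. For each $n$ let $V=\{1,\dots,n\}$, let $p_{ij}=p_{ji}\in(0,1)$ ($i\ne j$) be edge probabilities, let $r=r_n$ be a community size, and for every $C\subseteq V$ with $|C|=r$ let $\rho_C>1$ with $\rho_Cp_{ij}\le1$ for $i,j\in C$. All may depend on $n$, and limits are as $n\to\infty$. Under $\mathbb{P}_0$ the adjacency entries $A_{ij}$ ($i<j$) of a random simple graph on $V$ are independent $\mathrm{Bern}(p_{ij})$, with expectation $\mathbb{E}_0$. Notation. $e(D)=\sum_{i<j,\ i,j\in D}A_{ij}$. $h(x)=(x+1)\log(x+1)-x$. For $|D|\ge2$, $\bar p_D=\mathbb{E}_0[e(D)]/\binom{|D|}2$. For $q\in(0,1)$, $\theta_{ij}(q)=\log\frac{q(1-p_{ij})}{p_{ij}(1-q)}$. With $b_n=\log\log(n/r)$,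 for $C$ with $|C|=r$ define \[ \mathcal E_C=\Big\{D\subseteq C:\ (\rho_C-1)^2\,\mathbb{E}_0[e(D)]>(1-\epsilon/2)\,|D|\Big(\log\frac{n|D|}{r^2}-b_n\Big)\Big\}. \] Assumption 1.1. There exists $\delta\in(0,1/2)$ with: (i) $r=O(n^{1/2-\delta})$; (ii) there exists $0<\gamma_n=o(1)$ such that $\max_{|C|=r}\max_{D\subseteq C,\,|D|<r/(n/r)^{\gamma_n}}\frac{|D|\bar p_D}{|C|\bar p_C}\le\delta$; (iii) $\max_{|C|=r}1/\bar p_C=o(r/\log(n/r))$. Assumption 1.2. (i) $r=n^{o(1)}$; (ii) $\max_{|C|=r}\log(1/\bar p_C)=o(\log(n/r)/\log r)$. Assumption 2. $\max_{|C|=r}\max_{i,j\in C}\rho_C^2p_{ij}\to0$. *)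

theory Defs
  imports Complex_Main
begin

text \<open>Vertex set V = {1..n}; edge probabilities p i j (for i \<noteq> j) at stage n.\<close>

definition expected_edges :: "(nat \<Rightarrow> nat \<Rightarrow> real) \<Rightarrow> nat set \<Rightarrow> real" where
  "expected_edges p D = (\<Sum>i\<in>D. \<Sum>j\<in>D. if i < j then p i j else 0)"

definition hfun :: "real \<Rightarrow> real" where
  "hfun x = (x + 1) * ln (x + 1) - x"

definition pbar :: "(nat \<Rightarrow> nat \<Rightarrow> real) \<Rightarrow> nat set \<Rightarrow> real" where
  "pbar p D = expected_edges p D / real (card D choose 2)"

definition theta :: "(nat \<Rightarrow> nat \<Rightarrow> real) \<Rightarrow> nat \<Rightarrow> nat \<Rightarrow> real \<Rightarrow> real" where
  "theta p i j q = ln ((q * (1 - p i j)) / (p i j * (1 - q)))"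

definition communities :: "nat \<Rightarrow> nat \<Rightarrow> nat set set" where
  "communities n r = {C. C \<subseteq> {1..n} \<and> card C = r}"

definition bseq :: "nat \<Rightarrow> nat \<Rightarrow> real" where
  "bseq n r = ln (ln (real n / real r))"

definition calE :: "nat \<Rightarrow> nat \<Rightarrow> (nat \<Rightarrow> nat \<Rightarrow> real) \<Rightarrow> real \<Rightarrow> real \<Rightarrow> nat set \<Rightarrow> nat set set" where
  "calE n r p rho \<epsilon> C = {D. D \<subseteq> C \<and>
     (rho - 1)^2 * expected_edges p D >
       (1 - \<epsilon>/2) * real (card D) *
         (ln (real n * real (card D) / (real r)^2) - bseq n r)}"

definition setting :: "(nat \<Rightarrow> nat \<Rightarrow> nat \<Rightarrow> real) \<Rightarrow> (nat \<Rightarrow> nat) \<Rightarrow> (nat \<Rightarrow> nat set \<Rightarrow> real) \<Rightarrow> bool" where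
  "setting p r rho \<longleftrightarrow>
     (\<forall>n. \<forall>i\<in>{1..n}. \<forall>j\<in>{1..n}. i \<noteq> j \<longrightarrow> p n i j = p n j i \<and> 0 < p n i j \<and> p n i j < 1) \<and>
     (\<forall>n. \<forall>C\<in>communities n (r n). 1 < rho n C \<and>
         (\<forall>i\<in>C. \<forall>j\<in>C. i \<noteq> j \<longrightarrow> rho n C * p n i j \<le> 1))"

definition assumption_1_1 :: "(nat \<Rightarrow> nat \<Rightarrow> nat \<Rightarrow> real) \<Rightarrow> (nat \<Rightarrow> nat) \<Rightarrow> bool" where
  "assumption_1_1 p r \<longleftrightarrow> (\<exists>\<delta>::real. 0 < \<delta> \<and> \<delta> < 1/2 \<and>
     (\<exists>K. \<forall>\<^sub>F n in sequentially. real (r n) \<le> K * real n powr (1/2 - \<delta>)) \<and>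
     (\<exists>\<gamma>::nat \<Rightarrow> real. (\<forall>n. 0 < \<gamma> n) \<and> \<gamma> \<longlonglongrightarrow> 0 \<and>
        (\<forall>n. \<forall>C\<in>communities n (r n). \<forall>D. D \<subseteq> C \<and> 2 \<le> card D \<and>
             real (card D) < real (r n) / (real n / real (r n)) powr \<gamma> n \<longrightarrow>
             real (card D) * pbar (p n) D / (real (card C) * pbar (p n) C) \<le> \<delta>)) \<and>
     (\<forall>c>0. \<forall>\<^sub>F n in sequentially. \<forall>C\<in>communities n (r n).
        1 / pbar (p n) C \<le> c * (real (r n) / ln (real n / real (r n)))))"

definition assumption_1_2 :: "(nat \<Rightarrow> nat \<Rightarrow> nat \<Rightarrow> real) \<Rightarrow> (nat \<Rightarrow> nat) \<Rightarrow> bool" where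
  "assumption_1_2 p r \<longleftrightarrow>
     ((\<lambda>n. ln (real (r n)) / ln (real n)) \<longlonglongrightarrow> 0) \<and>
     (\<forall>c>0. \<forall>\<^sub>F n in sequentially. \<forall>C\<in>communities n (r n).
        ln (1 / pbar (p n) C) \<le> c * (ln (real n / real (r n)) / ln (real (r n))))"

definition assumption_2 :: "(nat \<Rightarrow> nat \<Rightarrow> nat \<Rightarrow> real) \<Rightarrow> (nat \<Rightarrow> nat) \<Rightarrow> (nat \<Rightarrow> nat set \<Rightarrow> real) \<Rightarrow> bool" where
  "assumption_2 p r rho \<longleftrightarrow>
     (\<forall>c>0. \<forall>\<^sub>F n in sequentially. \<forall>C\<in>communities n (r n).
        \<forall>i\<in>C. \<forall>j\<in>C. i \<noteq> j \<longrightarrow> (rho n C)^2 * p n i j \<le> c)"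

end

theory Submission
  imports Defs "HOL-Real_Asymp.Real_Asymp"
begin

text \<open>
  Since h is a strictly increasing bijection of [0, \<infinity>) onto itself, c_D exists and is unique.
  Writing q = p_ij and s = \<rho>_C - 1, the bound on \<theta> says that the odds ratio of c_D q is at
  most the square of that of \<rho>_C q; when \<rho>_C^2 q \<le> 1/10 (Assumption 2) this holds as soon
  as c_D \<le> (1 + 9s/10)^2.

  Let M be the factor log(n|D|/r^2) - b_n in the definition of \<E>_C, so that
  (1 - \<epsilon>/2) |D| M < s^2 E_0[e(D)] for D \<in> \<E>_C. If moreover log(n/|D|) \<le> 3M/2, the
  equation for c_D gives h(c_D - 1) < 3s^2/2 < 2(9s/10)^2 \<le> h((1 + 9s/10)^2 - 1), which is
  the required bound. Under Assumption 1.2 the inequality log(n/|D|) \<le> 3M/2 holds because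
  log r = o(log n). Under Assumption 1.1 it holds for every D with |D| \<ge> r/(n/r)^\<gamma>, while
  smaller sets cannot belong to \<E>_C at all: the hypothesis for D = C together with
  Assumption 1.1(iii) forces s \<le> 1/2 - \<delta>, and then the density bound 1.1(ii) makes
  s^2 E_0[e(D)] too small.
\<close>

lemma hfun_0 [simp]: "hfun 0 = 0"
  by (simp add: hfun_def)

lemma hfun_has_real_derivative: "x > -1 \<Longrightarrow> (hfun has_real_derivative ln (x + 1)) (at x)"
  unfolding hfun_def[abs_def] by (rule derivative_eq_intros refl | simp)+

lemma continuous_on_hfun: "continuous_on {0..} hfun"
  by (rule continuous_at_imp_continuous_on) (auto intro!: DERIV_isCont hfun_has_real_derivative)

lemma hfun_strict_mono: "strict_mono_on {0..} hfun"
proof (rule strict_mono_onI)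
  fix x y :: real
  assume "x \<in> {0..}" "y \<in> {0..}" "x < y"
  then show "hfun x < hfun y"
    by (intro DERIV_pos_imp_increasing_open[of x y hfun])
       (auto intro!: exI[of _ "ln (_ + 1)"] hfun_has_real_derivative
             intro: continuous_on_subset[OF continuous_on_hfun])
qed

lemma hfun_le_iff: "0 \<le> x \<Longrightarrow> 0 \<le> y \<Longrightarrow> hfun x \<le> hfun y \<longleftrightarrow> x \<le> y"
  by (simp add: strict_mono_on_less_eq[OF hfun_strict_mono])

lemma hfun_less_iff: "0 \<le> x \<Longrightarrow> 0 \<le> y \<Longrightarrow> hfun x < hfun y \<longleftrightarrow> x < y"
  by (simp add: strict_mono_on_less[OF hfun_strict_mono])

lemma hfun_nonneg: "0 \<le> x \<Longrightarrow> 0 \<le> hfun x"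
  using hfun_le_iff[of 0 x] by simp

lemma ln_one_plus_ge:
  fixes y :: real
  assumes "0 \<le> y"
  shows "2 * y / (2 + y) \<le> ln (1 + y)"
proof -
  let ?f = "\<lambda>t::real. ln (1 + t) - 2 * t / (2 + t)"
  have "?f 0 \<le> ?f y"
  proof (rule DERIV_nonneg_imp_nondecreasing[OF \<open>0 \<le> y\<close>])
    fix t :: real
    assume "0 \<le> t" "t \<le> y"
    then have "(?f has_real_derivative 1 / (1 + t) - 4 / (2 + t)^2) (at t)"
      by (auto intro!: derivative_eq_intros simp: field_simps power2_eq_square)
    moreover have "1 / (1 + t) - 4 / (2 + t)^2 = t^2 / ((1 + t) * (2 + t)^2)"
      using \<open>0 \<le> t\<close> by (simp add: divide_simps) (simp add: algebra_simps power2_eq_square)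
    moreover have "0 \<le> t^2 / ((1 + t) * (2 + t)^2)"
      using \<open>0 \<le> t\<close> by simp
    ultimately show "\<exists>d. (?f has_real_derivative d) (at t) \<and> 0 \<le> d" by metis
  qed
  then show ?thesis by simp
qed

lemma hfun_ge_quadratic:
  assumes x: "0 \<le> x"
  shows "x^2 / (2 + x) \<le> hfun x"
proof -
  have "(1 + x) * (2 * x / (2 + x)) \<le> (1 + x) * ln (1 + x)"
    using ln_one_plus_ge[OF x] x by (intro mult_left_mono) auto
  moreover have "(1 + x) * (2 * x / (2 + x)) - x = x^2 / (2 + x)"
    using x by (simp add: field_simps power2_eq_square)
  ultimately show ?thesis
    unfolding hfun_def by (simp add: add.commute)
qed

lemma sq_le_hfun:
  assumes "0 \<le> s" "s \<le> \<theta>"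
  shows "s^2 \<le> (2 + \<theta>) * hfun s"
proof -
  have "s^2 \<le> (2 + s) * hfun s"
    using hfun_ge_quadratic[of s] assms by (simp add: divide_le_eq mult.commute)
  also have "\<dots> \<le> (2 + \<theta>) * hfun s"
    using assms hfun_nonneg[of s] by (intro mult_right_mono) auto
  finally show ?thesis .
qed

lemma hfun_ge_at_square:
  assumes z: "0 \<le> z"
  shows "2 * z^2 \<le> hfun (2 * z + z^2)"
proof -
  have "2 * z + z^2 + 1 = (1 + z)^2"
    by (simp add: power2_eq_square algebra_simps)
  then have "hfun (2 * z + z^2) = 2 * (1 + z)^2 * ln (1 + z) - 2 * z - z^2"
    using z by (simp add: hfun_def ln_realpow)
  moreover have "(1 + z)^2 * (2 * z / (2 + z)) \<le> (1 + z)^2 * ln (1 + z)"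
    using ln_one_plus_ge[OF z] by (intro mult_left_mono) auto
  moreover have "2 * z^2 \<le> 2 * (1 + z)^2 * (2 * z / (2 + z)) - 2 * z - z^2"
    using z by (simp add: field_simps power2_eq_square power3_eq_cube)
  ultimately show ?thesis by linarith
qed

lemma ex1_hfun_eq:
  assumes T: "0 \<le> T"
  shows "\<exists>!x. 0 \<le> x \<and> hfun x = T"
proof -
  define z where "z = T + 1"
  have "T \<le> 2 * z^2"
    using T by (simp add: z_def power2_eq_square algebra_simps)
  also have "\<dots> \<le> hfun (2 * z + z^2)"
    using T by (intro hfun_ge_at_square) (simp add: z_def)
  finally have "\<exists>x\<ge>0. x \<le> 2 * z + z^2 \<and> hfun x = T"
    using T by (intro IVT') (auto simp: z_def intro: continuous_on_subset[OF continuous_on_hfun])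
  then obtain x where x: "0 \<le> x" "hfun x = T"
    by blast
  have inj: "inj_on hfun {0..}"
    using hfun_strict_mono by (rule strict_mono_on_imp_inj_on)
  show ?thesis
  proof (rule ex1I[of _ x])
    show "0 \<le> x \<and> hfun x = T"
      using x by simp
    show "y = x" if "0 \<le> y \<and> hfun y = T" for y
      using that x inj_onD[OF inj, of y x] by simp
  qed
qed

lemma ex1_scaled_hfun_eq:
  fixes K R :: real
  assumes "0 < K" "0 \<le> R"
  shows "\<exists>!c. 1 \<le> c \<and> K * hfun (c - 1) = R"
proof -
  have eq_iff: "K * hfun (c - 1) = R \<longleftrightarrow> hfun (c - 1) = R / K" for c
    using assms by (auto simp: field_simps)
  obtain x where x: "0 \<le> x" "hfun x = R / K"
    and unique: "\<And>y. 0 \<le> y \<Longrightarrow> hfun y = R / K \<Longrightarrow> y = x"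
    using ex1_hfun_eq[of "R / K"] assms by auto
  show ?thesis
  proof (rule ex1I[of _ "1 + x"])
    show "1 \<le> 1 + x \<and> K * hfun (1 + x - 1) = R"
      using x eq_iff[of "1 + x"] by simp
    show "c = 1 + x" if "1 \<le> c \<and> K * hfun (c - 1) = R" for c
      using that eq_iff[of c] unique[of "c - 1"] by simp
  qed
qed

lemma scaled_hfun_root_le:
  fixes \<epsilon> s d E L M c :: real
  assumes \<epsilon>: "0 < \<epsilon>" "\<epsilon> < 1" and s: "0 < s" and d: "0 \<le> d" and M: "0 \<le> M"
    and level: "(1 - \<epsilon>/2) * d * M < s^2 * E" and L: "L \<le> 3/2 * M"
    and c: "1 \<le> c" "(1 + \<epsilon>) * E * hfun (c - 1) = d * L"
  shows "c \<le> (1 + 9/10 * s)^2"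
proof -
  define w where "w = 9/10 * s"
  have "0 \<le> (1 - \<epsilon>/2) * d * M"
    using \<epsilon> d M by simp
  then have "0 < s^2 * E"
    using level by linarith
  then have E: "0 < E"
    using s by (simp add: zero_less_mult_iff)
  have "1 \<le> (1 + \<epsilon>) * (1 - \<epsilon>/2)"
    using \<epsilon> mult_nonneg_nonneg[of \<epsilon> "1 - \<epsilon>"] by (simp add: algebra_simps)
  moreover have "0 \<le> hfun (c - 1) * E"
    using E hfun_nonneg[of "c - 1"] c(1) by simp
  ultimately have "1 * (hfun (c - 1) * E) \<le> ((1 + \<epsilon>) * (1 - \<epsilon>/2)) * (hfun (c - 1) * E)"
    by (rule mult_right_mono)
  then have "hfun (c - 1) * E \<le> ((1 + \<epsilon>) * (1 - \<epsilon>/2)) * (hfun (c - 1) * E)"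
    by (simp only: mult_1_left)
  also have "\<dots> = (1 - \<epsilon>/2) * ((1 + \<epsilon>) * E * hfun (c - 1))"
    by (simp only: ac_simps)
  also have "\<dots> = (1 - \<epsilon>/2) * (d * L)"
    using c(2) by simp
  also have "\<dots> \<le> (1 - \<epsilon>/2) * (d * (3/2 * M))"
    using \<epsilon> d L by (intro mult_left_mono) auto
  also have "\<dots> = 3/2 * ((1 - \<epsilon>/2) * d * M)"
    by simp
  also have "\<dots> < 3/2 * (s^2 * E)"
    using level by (intro mult_strict_left_mono) auto
  also have "\<dots> = 3/2 * s^2 * E"
    by simp
  finally have "hfun (c - 1) < 3/2 * s^2"
    using E by simp
  also have "\<dots> < 2 * w^2"
    using s by (simp add: w_def power2_eq_square)
  also have "\<dots> \<le> hfun (2 * w + w^2)"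
    using s by (intro hfun_ge_at_square) (simp add: w_def)
  finally have "c - 1 < 2 * w + w^2"
    using hfun_less_iff[of "c - 1" "2 * w + w^2"] c(1) s by (simp add: w_def)
  then show ?thesis
    by (simp add: w_def power2_eq_square algebra_simps)
qed

lemma theta_eq_ln_odds_ratio:
  assumes "0 < p i j" "p i j < 1" "0 < x"
  shows "theta p i j (x * p i j) = ln (x * (1 - p i j) / (1 - x * p i j))"
  using assms by (simp add: theta_def mult.assoc)

lemma theta_le_twice:
  fixes p :: "nat \<Rightarrow> nat \<Rightarrow> real" and \<rho> c :: real
  assumes q: "0 < p i j" and \<rho>: "1 < \<rho>" and small: "\<rho>^2 * p i j \<le> 1/10"
    and c: "1 \<le> c" "c \<le> (1 + 9/10 * (\<rho> - 1))^2"
  shows "theta p i j (c * p i j) \<le> 2 * theta p i j (\<rho> * p i j)"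
proof -
  define q where "q = p i j"
  define s where "s = \<rho> - 1"
  have "1 \<le> \<rho>" "\<rho> \<le> \<rho>^2"
    using \<rho> by (simp_all add: power2_eq_square)
  then have "q \<le> \<rho>^2 * q" "\<rho> * q \<le> \<rho>^2 * q"
    using q mult_right_mono[of \<rho> "\<rho>^2" q] by (simp_all add: q_def)
  then have q_small: "q \<le> 1/10" and \<rho>q: "\<rho> * q < 1"
    using small by (simp_all add: q_def)
  have "(1 + 9/10 * s)^2 = \<rho>^2 - 19/100 * s^2 - s/5"
    by (simp add: s_def power2_eq_square field_simps)
  moreover have "c \<le> (1 + 9/10 * s)^2" "0 < s"
    using c(2) \<rho> by (simp_all add: s_def)
  ultimately have c_le: "c \<le> \<rho>^2 - 19/100 * s^2"
    by linarith
  then have "c \<le> \<rho>^2"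
    using zero_le_power2[of s] by linarith
  then have "c * q \<le> \<rho>^2 * q"
    using q by (intro mult_right_mono) (auto simp: q_def)
  then have cq: "c * q < 1"
    using small by (simp add: q_def)
  \<comment> \<open>the odds-ratio inequality with denominators cleared\<close>
  have "c * ((1 - q) + q * s^2) \<le> (\<rho>^2 - 19/100 * s^2) * ((1 - q) + q * s^2)"
    using c_le q_small q by (intro mult_right_mono) (auto simp: q_def)
  also have "\<dots> = \<rho>^2 * (1 - q) - s^2 * (19/100 * (1 - q) - \<rho>^2 * q) - 19/100 * q * s^4"
    by (simp add: field_simps power2_eq_square power4_eq_xxxx)
  also have "\<dots> \<le> \<rho>^2 * (1 - q)"
  proof -
    have "0 \<le> 19/100 * (1 - q) - \<rho>^2 * q"
      using q_small small by (simp add: q_def)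
    then have "0 \<le> s^2 * (19/100 * (1 - q) - \<rho>^2 * q)"
      by simp
    moreover have "0 \<le> 19/100 * q * s^4"
      using q by (simp add: q_def)
    ultimately show ?thesis
      by linarith
  qed
  finally have "c * ((1 - \<rho> * q)^2 + \<rho>^2 * q * (1 - q)) \<le> \<rho>^2 * (1 - q)"
    by (simp add: s_def algebra_simps power2_eq_square)
  then have "c * (1 - \<rho> * q)^2 \<le> \<rho>^2 * (1 - q) * (1 - c * q)"
    by (simp add: algebra_simps power2_eq_square)
  then have "c * (1 - \<rho> * q)^2 * (1 - q) \<le> \<rho>^2 * (1 - q) * (1 - c * q) * (1 - q)"
    using q_small by (intro mult_right_mono) auto
  then have "c * (1 - q) * (1 - \<rho> * q)^2 \<le> (\<rho> * (1 - q))^2 * (1 - c * q)"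
    by (simp add: power_mult_distrib power2_eq_square ac_simps)
  then have "c * (1 - q) / (1 - c * q) \<le> (\<rho> * (1 - q) / (1 - \<rho> * q))^2"
    using cq \<rho>q by (simp add: divide_simps power_divide)
  then have "ln (c * (1 - q) / (1 - c * q)) \<le> ln ((\<rho> * (1 - q) / (1 - \<rho> * q))^2)"
    using c(1) cq q_small by (intro ln_mono) auto
  then show ?thesis
    using q q_small c(1) \<rho> \<rho>q cq
    by (simp add: theta_eq_ln_odds_ratio ln_realpow q_def)
qed

lemma real_choose_two: "real (n choose 2) = real n * (real n - 1) / 2"
proof (induction n)
  case (Suc m)
  have "Suc m choose 2 = m + (m choose 2)"
    by (simp add: numeral_2_eq_2)
  then show ?case
    using Suc by (simp add: field_simps)
qed simp

lemma expected_edges_eq_pbar: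
  assumes "2 \<le> card D"
  shows "expected_edges p D = pbar p D * real (card D) * (real (card D) - 1) / 2"
  using assms by (simp add: pbar_def real_choose_two)

lemma expected_edges_pos:
  assumes "finite D" "2 \<le> card D" and pos: "\<forall>i\<in>D. \<forall>j\<in>D. i \<noteq> j \<longrightarrow> 0 < p i j"
  shows "0 < expected_edges p D"
proof -
  obtain i j where ij: "i \<in> D" "j \<in> D" "i < j"
  proof -
    obtain a b where "a \<in> D" "b \<in> D" "a \<noteq> b"
      using assms(1,2) card_le_Suc0_iff_eq[of D] by auto
    then show ?thesis
      using that[of "min a b" "max a b"] by (auto simp: min_def max_def)
  qed
  have nonneg: "0 \<le> (\<Sum>j\<in>D. if i' < j then p i' j else 0)" if "i' \<in> D" for i'
    using pos that by (intro sum_nonneg) (auto intro: less_imp_le)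
  have "0 < (\<Sum>j\<in>D. if i < j then p i j else 0)"
    using assms(1) ij pos by (intro sum_pos2[of D j]) (auto intro: less_imp_le)
  then show ?thesis
    unfolding expected_edges_def using nonneg by (rule sum_pos2[OF assms(1) ij(1)]) auto
qed

lemma card_ge_2_of_expected_edges_pos:
  assumes "0 < expected_edges p D"
  shows "2 \<le> card D"
proof (rule ccontr)
  assume "\<not> 2 \<le> card D"
  then have "D = {} \<or> (\<exists>x. D = {x}) \<or> infinite D"
    by (metis One_nat_def card.infinite card_1_singletonE card_eq_0_iff less_2_cases not_le)
  then show False
    using assms by (auto simp: expected_edges_def)
qed

lemma setting_p_pos:
  assumes "setting p r rho" "D \<subseteq> {1..n}"
  shows "\<forall>i\<in>D. \<forall>j\<in>D. i \<noteq> j \<longrightarrow> 0 < p n i j"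
  using assms unfolding setting_def by blast

lemma setting_rho_gt_1: "setting p r rho \<Longrightarrow> C \<in> communities n (r n) \<Longrightarrow> 1 < rho n C"
  unfolding setting_def by blast

lemma pbar_pos:
  assumes "setting p r rho" "C \<in> communities n r'" "2 \<le> r'"
  shows "0 < pbar (p n) C"
proof -
  have C: "C \<subseteq> {1..n}" "card C = r'" "finite C"
    using assms(2) by (auto simp: communities_def intro: finite_subset)
  then show ?thesis
    using expected_edges_pos[OF C(3) _ setting_p_pos[OF assms(1) C(1)]] assms(3)
    by (simp add: pbar_def)
qed

lemma community_subsetD:
  assumes "C \<in> communities n r" "D \<subseteq> C"
  shows "finite D" "card D \<le> r" "r \<le> n"
proof -
  have C: "C \<subseteq> {1..n}" "card C = r" "finite C"
    using assms(1) by (auto simp: communities_def intro: finite_subset)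
  then show "finite D" "card D \<le> r"
    using assms(2) card_mono finite_subset by metis+
  show "r \<le> n"
    using C card_mono[of "{1..n}" C] by simp
qed

lemma calE_subset: "D \<in> calE n r p rho \<epsilon> C \<Longrightarrow> D \<subseteq> C"
  by (simp add: calE_def)

lemma calE_nonempty: "D \<in> calE n r p rho \<epsilon> C \<Longrightarrow> D \<noteq> {}"
  by (auto simp: calE_def expected_edges_def)

definition calE_level :: "nat \<Rightarrow> nat \<Rightarrow> nat set \<Rightarrow> real" where
  "calE_level n r D = ln (real n * real (card D) / (real r)^2) - bseq n r"

lemma calE_level_less:
  "D \<in> calE n r p rho \<epsilon> C \<Longrightarrow>
    (1 - \<epsilon>/2) * real (card D) * calE_level n r D < (rho - 1)^2 * expected_edges p D"
  by (simp add: calE_def calE_level_def)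

lemma calE_expected_edges_pos:
  assumes D: "D \<in> calE n r p rho \<epsilon> C" and "\<epsilon> < 2" "0 \<le> calE_level n r D"
  shows "0 < expected_edges p D"
proof -
  have "0 \<le> (1 - \<epsilon>/2) * real (card D) * calE_level n r D"
    using assms(2,3) by simp
  then have "0 < (rho - 1)^2 * expected_edges p D"
    using calE_level_less[OF D] by linarith
  then show ?thesis
    by (simp add: zero_less_mult_iff)
qed

lemma calE_member_logs:
  assumes n: "0 < n" and C: "C \<in> communities n r" and D: "D \<in> calE n r p rho \<epsilon> C"
  shows "calE_level n r D
      = ln (real n) + ln (real (card D)) - 2 * ln (real r) - ln (ln (real n) - ln (real r))"
    and "ln (real n / real (card D)) = ln (real n) - ln (real (card D))"
    and "ln (real n / real r) = ln (real n) - ln (real r)"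
    and "0 \<le> ln (real (card D))" "ln (real (card D)) \<le> ln (real r)"
proof -
  note DC = community_subsetD[OF C calE_subset[OF D]]
  have d: "0 < card D"
    using calE_nonempty[OF D] DC(1) by (simp add: card_gt_0_iff)
  with DC(2) have "0 < r"
    by simp
  with d n show "calE_level n r D
      = ln (real n) + ln (real (card D)) - 2 * ln (real r) - ln (ln (real n) - ln (real r))"
    by (simp add: calE_level_def bseq_def ln_div ln_mult ln_realpow)
  show "ln (real n / real (card D)) = ln (real n) - ln (real (card D))"
    using d n by (simp add: ln_div)
  show "ln (real n / real r) = ln (real n) - ln (real r)"
    using \<open>0 < r\<close> n by (simp add: ln_div)
  show "0 \<le> ln (real (card D))" "ln (real (card D)) \<le> ln (real r)"
    using d DC(2) by simp_all
qed

text \<open>Assumptions 1.1 and 1.2 enter the proof only through the following property.\<close>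

definition calE_regular ::
  "(nat \<Rightarrow> nat \<Rightarrow> nat \<Rightarrow> real) \<Rightarrow> (nat \<Rightarrow> nat) \<Rightarrow> (nat \<Rightarrow> nat set \<Rightarrow> real) \<Rightarrow>
    real \<Rightarrow> nat \<Rightarrow> bool"
where
  "calE_regular p r rho \<epsilon> n \<longleftrightarrow>
    (\<forall>C\<in>communities n (r n). \<forall>D\<in>calE n (r n) (p n) (rho n C) \<epsilon> C.
      0 \<le> calE_level n (r n) D \<and> ln (real n / real (card D)) \<le> 3/2 * calE_level n (r n) D)"

lemma eventually_ln_le_linear:
  assumes "0 < c"
  shows "eventually (\<lambda>x::real. ln x \<le> c * x) at_top"
proof -
  have "((\<lambda>x::real. ln x / x) \<longlongrightarrow> 0) at_top"
    by real_asymp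
  then have "eventually (\<lambda>x. ln x / x < c) at_top"
    using \<open>0 < c\<close> by (rule order_tendstoD(2))
  then show ?thesis
    using eventually_gt_at_top[of 0] by eventually_elim (auto simp: divide_less_eq)
qed

lemma eventually_ln_sequentially:
  "eventually P at_top \<Longrightarrow> eventually (\<lambda>n. P (ln (real n))) sequentially"
  using filterlim_compose[OF ln_at_top filterlim_real_sequentially] by (simp add: filterlim_iff)

lemma eventually_calE_regular_1_2:
  assumes "assumption_1_2 p r"
  shows "eventually (calE_regular p r rho \<epsilon>) sequentially"
proof -
  have "(\<lambda>n. ln (real (r n)) / ln (real n)) \<longlonglongrightarrow> 0"
    using assms by (simp add: assumption_1_2_def)
  then have "eventually (\<lambda>n. ln (real (r n)) / ln (real n) < 1/20) sequentially"
    by (rule order_tendstoD(2)) simp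
  moreover have "eventually (\<lambda>n. ln (ln (real n)) \<le> 1/10 * ln (real n) \<and> 20 \<le> ln (real n)) sequentially"
    by (intro eventually_ln_sequentially eventually_conj eventually_ln_le_linear eventually_ge_at_top) simp
  ultimately show ?thesis
  proof eventually_elim
    case (elim n)
    define N where "N = ln (real n)"
    have N: "20 \<le> N" "ln N \<le> N / 10"
      using elim by (simp_all add: N_def)
    then have "0 < n"
      by (cases n) (auto simp: N_def)
    show ?case
      unfolding calE_regular_def
    proof (intro ballI)
      fix C D
      assume C: "C \<in> communities n (r n)" and D: "D \<in> calE n (r n) (p n) (rho n C) \<epsilon> C"
      define u where "u = ln (real (r n))"
      define ld where "ld = ln (real (card D))"
      note logs = calE_member_logs[OF \<open>0 < n\<close> C D, folded N_def u_def ld_def]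
      have u: "u < N / 20"
        using elim N by (simp add: u_def N_def divide_less_eq)
      then have "ln (N - u) \<le> ln N"
        using N logs(4,5) by simp
      with N u logs(1,2,4,5)
      show "0 \<le> calE_level n (r n) D \<and> ln (real n / real (card D)) \<le> 3/2 * calE_level n (r n) D"
        by linarith
    qed
  qed
qed

text \<open>Here N, u and b stand for log n, log r and b_n.\<close>

lemma level_gap:
  fixes \<delta> \<epsilon> N u k b :: real
  assumes \<delta>: "0 < \<delta>" "\<delta> < 1/2" and \<epsilon>: "0 < \<epsilon>" "\<epsilon> < 1"
    and u: "u \<le> k + (1/2 - \<delta>) * N" and k: "0 \<le> k" and b: "0 \<le> b"
    and big: "2 * k + b \<le> \<delta> * \<epsilon> * N"
  shows "\<delta> * (2 + (1/2 - \<delta>)) * (1 - \<epsilon>) * (N - u) \<le> (1 - \<epsilon>/2) * (N - 2 * u - b)"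
proof -
  define A where "A = 1 - \<epsilon>/2"
  define B where "B = \<delta> * (2 + (1/2 - \<delta>)) * (1 - \<epsilon>)"
  have "0 \<le> \<delta> * \<epsilon> * N"
    using big k b by linarith
  then have N: "0 \<le> N"
    using mult_pos_pos[OF \<delta>(1) \<epsilon>(1)] by (simp add: zero_le_mult_iff)
  have "1 - \<delta> * (2 + (1/2 - \<delta>)) = (1/2 - \<delta>) * (2 - \<delta>)"
    "2 - (2 + (1/2 - \<delta>)) * (1/2 + \<delta>) = (1/2 - \<delta>) * (3/2 - \<delta>)"
    by (simp_all add: field_simps)
  moreover have "0 \<le> (1/2 - \<delta>) * (2 - \<delta>)" "0 \<le> (1/2 - \<delta>) * (3/2 - \<delta>)"
    using \<delta> by simp_all
  ultimately have "\<delta> * (2 + (1/2 - \<delta>)) \<le> 1" "(2 + (1/2 - \<delta>)) * (1/2 + \<delta>) \<le> 2"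
    by linarith+
  then have "0 \<le> B" "B \<le> 1"
    using \<delta> \<epsilon> by (auto simp: B_def intro: mult_le_one)
  have "B * (1/2 + \<delta>) = (\<delta> * (1 - \<epsilon>)) * ((2 + (1/2 - \<delta>)) * (1/2 + \<delta>))"
    by (simp add: B_def ac_simps)
  also have "\<dots> \<le> (\<delta> * (1 - \<epsilon>)) * 2"
    using \<open>(2 + (1/2 - \<delta>)) * (1/2 + \<delta>) \<le> 2\<close> \<delta> \<epsilon> by (intro mult_left_mono) auto
  finally have B: "0 \<le> B" "B \<le> 1" "B * (1/2 + \<delta>) \<le> 2 * \<delta> * (1 - \<epsilon>)"
    using \<open>0 \<le> B\<close> \<open>B \<le> 1\<close> by simp_all
  have A: "1/2 \<le> A" "A \<le> 1"
    using \<epsilon> by (auto simp: A_def)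
  have "(2 * A - B) * u \<le> (2 * A - B) * (k + (1/2 - \<delta>) * N)"
    using u A B by (intro mult_left_mono) auto
  moreover have "(2 * A - B) * k \<le> 2 * k" "A * b \<le> b"
    using A B k b by (auto intro: mult_right_le_one_le mult_left_le_one_le simp: mult_right_mono)
  moreover have "\<delta> * \<epsilon> * N \<le> (2 * \<delta> * A - B * (1/2 + \<delta>)) * N"
    using B(3) N by (intro mult_right_mono) (auto simp: A_def algebra_simps)
  ultimately have "0 \<le> A * (N - 2 * u - b) - B * (N - u)"
    using big by (simp add: algebra_simps)
  then show ?thesis
    by (simp add: A_def B_def)
qed

lemma le_of_density_bound:
  fixes E P R X c h :: real
  assumes Eh: "E * h \<le> R * X" and E: "E = P * R * (R - 1) / 2" and P: "X \<le> c * R * P"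
    and R: "2 \<le> R" and X: "0 < X" and c: "0 < c" and h: "0 \<le> h"
  shows "h \<le> 4 * c"
proof -
  have "X * ((R - 1) / (2 * c)) \<le> c * R * P * ((R - 1) / (2 * c))"
    using P R c by (intro mult_right_mono) auto
  also have "\<dots> = E"
    using c by (simp add: E field_simps)
  finally have "X * ((R - 1) / (2 * c)) * h \<le> E * h"
    using h by (rule mult_right_mono)
  also have "\<dots> \<le> R * X"
    by (rule Eh)
  finally have "X * ((R - 1) / (2 * c) * h) \<le> X * R"
    by (simp only: ac_simps)
  then have "(R - 1) / (2 * c) * h \<le> R"
    by (rule mult_left_le_imp_le) (use X in simp)
  then have "(R - 1) * h \<le> 2 * c * R"
    using c by (simp add: field_simps)
  also have "\<dots> \<le> (R - 1) * (4 * c)"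
    using c R by simp
  finally show ?thesis
    using R by simp
qed

context
  fixes p :: "nat \<Rightarrow> nat \<Rightarrow> nat \<Rightarrow> real" and r :: "nat \<Rightarrow> nat"
    and rho :: "nat \<Rightarrow> nat set \<Rightarrow> real" and \<epsilon> :: real
  assumes set: "setting p r rho" and \<epsilon>: "0 < \<epsilon>" "\<epsilon> < 1"
    and hyp: "\<forall>n. \<forall>C\<in>communities n (r n). \<forall>D. D \<subseteq> C \<and> D \<noteq> {} \<longrightarrow>
      expected_edges (p n) D * hfun (rho n C - 1) / (real (card D) * ln (real n / real (card D)))
        \<le> 1 - \<epsilon>"
begin

lemma community_hfun_le:
  assumes C: "C \<in> communities n (r n)" and "1 \<le> r n" and X: "0 < ln (real n / real (r n))"
  shows "expected_edges (p n) C * hfun (rho n C - 1) \<le> (1 - \<epsilon>) * (real (r n) * ln (real n / real (r n)))"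
proof -
  have "card C = r n" "C \<noteq> {}"
    using C assms(2) by (auto simp: communities_def)
  moreover have "expected_edges (p n) C * hfun (rho n C - 1) / (real (card C) * ln (real n / real (card C)))
      \<le> 1 - \<epsilon>"
    using hyp C \<open>C \<noteq> {}\<close> by blast
  ultimately show ?thesis
    using X assms(2) by (simp add: pos_divide_le_eq)
qed

lemma rho_le_of_dense:
  fixes \<theta> :: real
  assumes C: "C \<in> communities n (r n)" "2 \<le> r n" and X: "0 < ln (real n / real (r n))"
    and \<theta>: "0 < \<theta>"
    and dense: "1 / pbar (p n) C \<le> \<theta>^2 / (8 * (2 + \<theta>)) * (real (r n) / ln (real n / real (r n)))"
  shows "rho n C - 1 \<le> \<theta>"
proof -
  define X where "X = ln (real n / real (r n))"
  define c0 where "c0 = \<theta>^2 / (8 * (2 + \<theta>))"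
  define h where "h = hfun (rho n C - 1)"
  have c0: "0 < c0"
    using \<theta> by (simp add: c0_def)
  have h: "0 \<le> h"
    using setting_rho_gt_1[OF set C(1)] by (simp add: h_def hfun_nonneg)
  have "h \<le> 4 * c0"
  proof (rule le_of_density_bound)
    have "expected_edges (p n) C * h \<le> (1 - \<epsilon>) * (real (r n) * X)"
      using community_hfun_le[OF C(1) _ X] C(2) by (simp add: h_def X_def)
    also have "\<dots> \<le> real (r n) * X"
      using \<epsilon> X by (intro mult_left_le_one_le) (auto simp: X_def)
    finally show "expected_edges (p n) C * h \<le> real (r n) * X" .
    show "expected_edges (p n) C = pbar (p n) C * real (r n) * (real (r n) - 1) / 2"
      using expected_edges_eq_pbar[of C "p n"] C by (simp add: communities_def)
    show "X \<le> c0 * real (r n) * pbar (p n) C"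
      using dense[folded c0_def X_def] pbar_pos[OF set C] X by (simp add: X_def pos_divide_le_eq)
  qed (use C(2) X c0 h in \<open>simp_all add: X_def\<close>)
  also have "\<dots> < \<theta>^2 / (2 + \<theta>)"
    using \<theta> by (simp add: c0_def field_simps add_pos_pos mult_pos_pos)
  also have "\<dots> \<le> hfun \<theta>"
    using \<theta> by (simp add: hfun_ge_quadratic)
  finally show ?thesis
    using hfun_less_iff[of \<theta> "rho n C - 1"] \<theta> setting_rho_gt_1[OF set C(1)] by (auto simp: h_def)
qed

lemma calE_level_lt_of_sparse:
  fixes \<delta> \<theta> :: real
  assumes C: "C \<in> communities n (r n)" and D: "D \<in> calE n (r n) (p n) (rho n C) \<epsilon> C"
    and d: "2 \<le> card D" and X: "0 < ln (real n / real (r n))"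
    and \<theta>: "rho n C - 1 \<le> \<theta>" and \<delta>: "0 \<le> \<delta>"
    and sparse: "real (card D) * pbar (p n) D \<le> \<delta> * real (r n) * pbar (p n) C"
  shows "(1 - \<epsilon>/2) * calE_level n (r n) D < \<delta> * (2 + \<theta>) * (1 - \<epsilon>) * ln (real n / real (r n))"
proof -
  define s where "s = rho n C - 1"
  define h where "h = hfun s"
  define X where "X = ln (real n / real (r n))"
  define R where "R = real (r n)"
  define d where "d = real (card D)"
  define K where "K = \<delta> * (2 + \<theta>)"
  have s: "0 < s"
    using setting_rho_gt_1[OF set C] by (simp add: s_def)
  have dR: "2 \<le> d" "d \<le> R"
    using d community_subsetD[OF C calE_subset[OF D]] by (simp_all add: d_def R_def)
  have K: "0 \<le> K"
    using \<delta> \<theta> s by (simp add: K_def s_def)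
  have EC: "expected_edges (p n) C = pbar (p n) C * R * (R - 1) / 2"
    using expected_edges_eq_pbar[of C "p n"] C dR by (simp add: communities_def R_def)
  have s2: "s^2 \<le> (2 + \<theta>) * h"
    using sq_le_hfun[of s \<theta>] s \<theta> by (simp add: s_def h_def)
  have "s^2 * expected_edges (p n) D = (d - 1) / 2 * s^2 * (d * pbar (p n) D)"
    using expected_edges_eq_pbar[OF d] by (simp add: d_def)
  also have "\<dots> \<le> (d - 1) / 2 * s^2 * (\<delta> * R * pbar (p n) C)"
    using sparse dR by (intro mult_left_mono) (auto simp: d_def R_def)
  also have "\<dots> = (d - 1) / 2 * \<delta> * R * pbar (p n) C * s^2"
    by simp
  also have "\<dots> \<le> (d - 1) / 2 * \<delta> * R * pbar (p n) C * ((2 + \<theta>) * h)"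
    using s2 dR \<delta> pbar_pos[OF set C] by (intro mult_left_mono) (auto simp: R_def)
  also have "\<dots> = K * (d - 1) / (R - 1) * (expected_edges (p n) C * h)"
    using dR by (simp add: EC K_def field_simps)
  also have "\<dots> \<le> K * (d - 1) / (R - 1) * ((1 - \<epsilon>) * (R * X))"
    using community_hfun_le[OF C _ X] K dR by (intro mult_left_mono) (auto simp: h_def s_def R_def X_def)
  also have "\<dots> = K * (1 - \<epsilon>) * X * ((d - 1) * R / (R - 1))"
    by simp
  also have "\<dots> \<le> K * (1 - \<epsilon>) * X * d"
    using K \<epsilon> X dR mult_nonneg_nonneg[OF K, of "(1 - \<epsilon>) * X"]
    by (intro mult_left_mono) (auto simp: X_def divide_le_eq algebra_simps)
  finally have "(1 - \<epsilon>/2) * d * calE_level n (r n) D < (K * (1 - \<epsilon>) * X) * d"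
    using calE_level_less[OF D] by (simp add: s_def d_def)
  then show ?thesis
    using dR by (simp add: K_def X_def)
qed

lemma calE_member_large:
  fixes \<delta> k g :: real
  assumes C: "C \<in> communities n (r n)" and D: "D \<in> calE n (r n) (p n) (rho n C) \<epsilon> C"
    and d: "2 \<le> card D" and \<delta>: "0 < \<delta>" "\<delta> < 1/2"
    and sparse: "\<forall>D'. D' \<subseteq> C \<and> 2 \<le> card D' \<and>
      real (card D') < real (r n) / (real n / real (r n)) powr g \<longrightarrow>
      real (card D') * pbar (p n) D' / (real (card C) * pbar (p n) C) \<le> \<delta>"
    and dense: "1 / pbar (p n) C
      \<le> (1/2 - \<delta>)^2 / (8 * (2 + (1/2 - \<delta>))) * (real (r n) / ln (real n / real (r n)))"
    and n: "0 < n" and u: "ln (real (r n)) \<le> k + (1/2 - \<delta>) * ln (real n)" and k: "0 \<le> k"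
    and X: "1 \<le> ln (real n / real (r n))"
    and big: "2 * k + ln (ln (real n / real (r n))) \<le> \<delta> * \<epsilon> * ln (real n)"
  shows "real (r n) / (real n / real (r n)) powr g \<le> real (card D)"
proof (rule ccontr)
  define X where "X = ln (real n / real (r n))"
  define M where "M = calE_level n (r n) D"
  note logs = calE_member_logs[OF n C D, folded X_def M_def]
  have r: "2 \<le> r n"
    using d community_subsetD[OF C calE_subset[OF D]] by simp
  assume "\<not> ?thesis"
  then have "real (card D) * pbar (p n) D / (real (r n) * pbar (p n) C) \<le> \<delta>"
    using sparse C calE_subset[OF D] d by (auto simp: communities_def)
  then have sparse: "real (card D) * pbar (p n) D \<le> \<delta> * real (r n) * pbar (p n) C"
    using pbar_pos[OF set C r] r by (simp add: pos_divide_le_eq mult.assoc)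
  have \<rho>: "rho n C - 1 \<le> 1/2 - \<delta>"
    using rho_le_of_dense[OF C r _ _ dense] X \<delta> by simp
  have "(1 - \<epsilon>/2) * M < \<delta> * (2 + (1/2 - \<delta>)) * (1 - \<epsilon>) * X"
    using calE_level_lt_of_sparse[OF C D d _ \<rho> _ sparse] X \<delta> by (simp add: M_def X_def)
  also have "\<dots> \<le> (1 - \<epsilon>/2) * (ln (real n) - 2 * ln (real (r n)) - ln X)"
    using level_gap[OF \<delta> \<epsilon> u k _ big] X logs(3) by (simp add: X_def)
  also have "\<dots> \<le> (1 - \<epsilon>/2) * M"
    using logs(1,3,4) \<epsilon> by (intro mult_left_mono) auto
  finally show False
    by simp
qed

lemma calE_regular_1_1_at:
  fixes \<delta> k g X1 :: real
  assumes \<delta>: "0 < \<delta>" "\<delta> < 1/2"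
    and sparse: "\<forall>C\<in>communities n (r n). \<forall>D. D \<subseteq> C \<and> 2 \<le> card D \<and>
      real (card D) < real (r n) / (real n / real (r n)) powr g \<longrightarrow>
      real (card D) * pbar (p n) D / (real (card C) * pbar (p n) C) \<le> \<delta>"
    and dense: "\<forall>C\<in>communities n (r n). 1 / pbar (p n) C
      \<le> (1/2 - \<delta>)^2 / (8 * (2 + (1/2 - \<delta>))) * (real (r n) / ln (real n / real (r n)))"
    and g: "g \<le> 1/20"
    and u: "ln (real (r n)) \<le> k + (1/2 - \<delta>) * ln (real n)" and k: "0 \<le> k"
    and N: "4 * k \<le> \<delta> * \<epsilon> * ln (real n)" "2 * (X1 + k) \<le> ln (real n)"
    and X1: "2 \<le> X1" "\<forall>x\<ge>X1. ln x \<le> \<delta> * \<epsilon> / 2 * x"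
  shows "calE_regular p r rho \<epsilon> n"
  unfolding calE_regular_def
proof (intro ballI)
  fix C D
  assume C: "C \<in> communities n (r n)" and D: "D \<in> calE n (r n) (p n) (rho n C) \<epsilon> C"
  define N where "N = ln (real n)"
  define X where "X = ln (real n / real (r n))"
  define M where "M = calE_level n (r n) D"
  define ld where "ld = ln (real (card D))"
  have "0 < n"
    using N X1 k by (cases n) auto
  note logs = calE_member_logs[OF this C D, folded N_def X_def M_def ld_def]
  have "ln X = ln (N - ln (real (r n)))"
    using logs(3) by simp
  note logs = logs(1)[folded this] logs(2-)
  have N0: "0 \<le> N"
    using N X1 k by (simp add: N_def)
  have \<delta>N: "0 \<le> \<delta> * N" "\<delta> * \<epsilon> * N \<le> \<delta> * N"
    using \<delta> \<epsilon> N0 mult_left_le_one_le[of "\<delta> * N" \<epsilon>] by (simp_all add: ac_simps)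
  have \<delta>N_eq: "(1/2 - \<delta>) * N = 1/2 * N - \<delta> * N" "\<delta> * \<epsilon> / 2 * N = \<delta> * \<epsilon> * N / 2"
    by (simp_all add: left_diff_distrib)
  have X: "X1 \<le> X" "X \<le> N"
    using logs u \<delta>N \<delta>N_eq N by (simp_all add: N_def)
  have "ln X \<le> \<delta> * \<epsilon> / 2 * X"
    using X1 X by simp
  moreover have "\<delta> * \<epsilon> / 2 * X \<le> \<delta> * \<epsilon> / 2 * N"
    using X \<delta> \<epsilon> by (intro mult_left_mono) auto
  moreover have "\<delta> * \<epsilon> / 2 * X \<le> 1/4 * X"
    using \<delta> \<epsilon> X X1 mult_strict_mono[of \<delta> "1/2" \<epsilon> 1] by (intro mult_right_mono) auto
  ultimately have lnX: "ln X \<le> \<delta> * \<epsilon> / 2 * N" "ln X \<le> 1/4 * X"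
    by linarith+
  have M: "0 \<le> M"
    using logs u N \<delta>N \<delta>N_eq lnX by (simp add: N_def)
  then have d: "2 \<le> card D"
    using calE_expected_edges_pos[OF D] \<epsilon> by (intro card_ge_2_of_expected_edges_pos) (simp add: M_def)
  have r: "0 < real (r n)"
    using d community_subsetD[OF C calE_subset[OF D]] by simp
  have not_small: "real (r n) / (real n / real (r n)) powr g \<le> real (card D)"
    using calE_member_large[OF C D d \<delta> bspec[OF sparse C] bspec[OF dense C] \<open>0 < n\<close> u k] X X1 lnX N \<delta>N_eq
    by (simp add: X_def N_def)
  have "ln (real (r n) / (real n / real (r n)) powr g) = ln (real (r n)) - g * X"
    using r \<open>0 < n\<close> by (simp add: X_def ln_div ln_powr)
  moreover have "ln (real (r n) / (real n / real (r n)) powr g) \<le> ld"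
    unfolding ld_def using not_small r \<open>0 < n\<close> by (intro ln_mono) auto
  moreover have "g * X \<le> 1/20 * X"
    using g X X1 by (intro mult_right_mono) auto
  ultimately show "0 \<le> M \<and> ln (real n / real (card D)) \<le> 3/2 * M"
    using M logs lnX by (simp add: N_def)
qed

lemma eventually_calE_regular_1_1:
  assumes "assumption_1_1 p r"
  shows "eventually (calE_regular p r rho \<epsilon>) sequentially"
proof -
  obtain \<delta> :: real and K and \<gamma> :: "nat \<Rightarrow> real" where
    \<delta>: "0 < \<delta>" "\<delta> < 1/2" and
    r_le: "\<forall>\<^sub>F n in sequentially. real (r n) \<le> K * real n powr (1/2 - \<delta>)" and
    \<gamma>: "\<gamma> \<longlonglongrightarrow> 0" and
    sparse: "\<forall>n. \<forall>C\<in>communities n (r n). \<forall>D. D \<subseteq> C \<and> 2 \<le> card D \<and>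
      real (card D) < real (r n) / (real n / real (r n)) powr \<gamma> n \<longrightarrow>
      real (card D) * pbar (p n) D / (real (card C) * pbar (p n) C) \<le> \<delta>" and
    dense: "\<forall>c>0. \<forall>\<^sub>F n in sequentially. \<forall>C\<in>communities n (r n).
      1 / pbar (p n) C \<le> c * (real (r n) / ln (real n / real (r n)))"
    using assms unfolding assumption_1_1_def by blast
  define k where "k = ln (max K 1)"
  have k: "0 \<le> k"
    by (simp add: k_def)
  obtain X0 where X0: "\<forall>x\<ge>X0. ln x \<le> \<delta> * \<epsilon> / 2 * x"
    using eventually_ln_le_linear[of "\<delta> * \<epsilon> / 2"] \<delta> \<epsilon> by (auto simp: eventually_at_top_linorder)
  define X1 where "X1 = max X0 2"
  have "\<forall>\<^sub>F n in sequentially. 4 * k \<le> \<delta> * \<epsilon> * ln (real n) \<and> 2 * (X1 + k) \<le> ln (real n)"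
    using \<delta> \<epsilon>
    by (intro eventually_ln_sequentially eventually_conj eventually_ge_at_top
        eventually_ge_at_top[of "4 * k / (\<delta> * \<epsilon>)", THEN eventually_mono])
       (simp add: divide_le_eq mult.commute)
  moreover have "\<forall>\<^sub>F n in sequentially. \<gamma> n < 1/20"
    using \<gamma> by (rule order_tendstoD(2)) simp
  moreover have "\<forall>\<^sub>F n in sequentially. \<forall>C\<in>communities n (r n). 1 / pbar (p n) C
      \<le> (1/2 - \<delta>)^2 / (8 * (2 + (1/2 - \<delta>))) * (real (r n) / ln (real n / real (r n)))"
    using \<delta> by (intro dense[rule_format]) simp
  ultimately show ?thesis
    using r_le
  proof eventually_elim
    case (elim n)
    have "0 < n"
      using elim k by (cases n) (auto simp: X1_def)
    have "0 \<le> (1/2 - \<delta>) * ln (real n)"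
      using elim k \<delta> by (intro mult_nonneg_nonneg) (auto simp: X1_def)
    have "ln (real (r n)) \<le> k + (1/2 - \<delta>) * ln (real n)"
    proof (cases "r n = 0")
      case False
      then have "ln (real (r n)) \<le> ln (max K 1 * real n powr (1/2 - \<delta>))"
        using elim by (intro ln_mono) (auto intro: order.trans[OF _ mult_right_mono])
      also have "\<dots> = k + (1/2 - \<delta>) * ln (real n)"
        using \<open>0 < n\<close> by (simp add: k_def ln_mult max_def)
      finally show ?thesis .
    qed (use k \<open>0 \<le> (1/2 - \<delta>) * ln (real n)\<close> in simp)
    then show ?case
      using calE_regular_1_1_at[OF \<delta>, of n "\<gamma> n"] sparse elim k X0 X1_def by fastforce
  qed
qed

end

lemma calE_root:
  assumes set: "setting p r rho" and \<epsilon>: "0 < \<epsilon>" "\<epsilon> < 1" and reg: "calE_regular p r rho \<epsilon> n"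
    and C: "C \<in> communities n (r n)" and D: "D \<in> calE n (r n) (p n) (rho n C) \<epsilon> C"
  shows "\<exists>!c. 1 \<le> c \<and>
      (1 + \<epsilon>) * expected_edges (p n) D * hfun (c - 1) = real (card D) * ln (real n / real (card D))"
    and "1 \<le> c \<Longrightarrow>
      (1 + \<epsilon>) * expected_edges (p n) D * hfun (c - 1) = real (card D) * ln (real n / real (card D)) \<Longrightarrow>
      c \<le> (1 + 9/10 * (rho n C - 1))^2"
proof -
  define L where "L = ln (real n / real (card D))"
  have M: "0 \<le> calE_level n (r n) D" "L \<le> 3/2 * calE_level n (r n) D"
    using reg C D by (simp_all add: calE_regular_def L_def)
  have "0 < card D" "card D \<le> n"
    using community_subsetD[OF C calE_subset[OF D]] calE_nonempty[OF D] by (auto simp: card_gt_0_iff)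
  then have "0 \<le> L"
    by (simp add: L_def)
  then show "\<exists>!c. 1 \<le> c \<and> (1 + \<epsilon>) * expected_edges (p n) D * hfun (c - 1) = real (card D) * L"
    using calE_expected_edges_pos[OF D] \<epsilon> M by (intro ex1_scaled_hfun_eq) simp_all
  show "c \<le> (1 + 9/10 * (rho n C - 1))^2"
    if "1 \<le> c" "(1 + \<epsilon>) * expected_edges (p n) D * hfun (c - 1) = real (card D) * L"
    using scaled_hfun_root_le[OF \<epsilon> _ _ M(1) calE_level_less[OF D] M(2) that]
      setting_rho_gt_1[OF set C] by simp
qed

theorem lemma3:
  fixes p :: "nat \<Rightarrow> nat \<Rightarrow> nat \<Rightarrow> real"
    and r :: "nat \<Rightarrow> nat"
    and rho :: "nat \<Rightarrow> nat set \<Rightarrow> real"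
    and \<epsilon> :: real
  assumes eps: "0 < \<epsilon>" "\<epsilon> < 1"
    and set: "setting p r rho"
    and A2: "assumption_2 p r rho"
    and A1: "assumption_1_1 p r \<or> assumption_1_2 p r"
    and hyp: "\<forall>n. \<forall>C\<in>communities n (r n). \<forall>D. D \<subseteq> C \<and> D \<noteq> {} \<longrightarrow>
        expected_edges (p n) D * hfun (rho n C - 1) / (real (card D) * ln (real n / real (card D)))
          \<le> 1 - \<epsilon>"
  shows "\<forall>\<^sub>F n in sequentially. \<forall>C\<in>communities n (r n). \<forall>D\<in>calE n (r n) (p n) (rho n C) \<epsilon> C.
      (\<exists>!c::real. 1 \<le> c \<and>
          (1 + \<epsilon>) * expected_edges (p n) D * hfun (c - 1) = real (card D) * ln (real n / real (card D))) \<and>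
      (\<forall>c::real. 1 \<le> c \<and>
          (1 + \<epsilon>) * expected_edges (p n) D * hfun (c - 1) = real (card D) * ln (real n / real (card D))
        \<longrightarrow> (\<forall>i\<in>D. \<forall>j\<in>D. i \<noteq> j \<longrightarrow>
              theta (p n) i j (c * p n i j) \<le> 2 * theta (p n) i j (rho n C * p n i j)))"
proof -
  have "eventually (calE_regular p r rho \<epsilon>) sequentially"
    using A1 eventually_calE_regular_1_1[OF set eps hyp] eventually_calE_regular_1_2 by blast
  moreover have "\<forall>\<^sub>F n in sequentially. \<forall>C\<in>communities n (r n).
      \<forall>i\<in>C. \<forall>j\<in>C. i \<noteq> j \<longrightarrow> (rho n C)^2 * p n i j \<le> 1/10"
    using A2 unfolding assumption_2_def by (elim allE[of _ "1/10"]) simp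
  ultimately show ?thesis
  proof eventually_elim
    case (elim n)
    show ?case
    proof (intro ballI conjI allI impI)
      fix C D
      assume C: "C \<in> communities n (r n)" and D: "D \<in> calE n (r n) (p n) (rho n C) \<epsilon> C"
      note root = calE_root[OF set eps elim(1) C D]
      show "\<exists>!c. 1 \<le> c \<and>
          (1 + \<epsilon>) * expected_edges (p n) D * hfun (c - 1) = real (card D) * ln (real n / real (card D))"
        by (rule root(1))
      fix c i j
      assume c: "1 \<le> c \<and>
          (1 + \<epsilon>) * expected_edges (p n) D * hfun (c - 1) = real (card D) * ln (real n / real (card D))"
        and ij: "i \<in> D" "j \<in> D" "i \<noteq> j"
      have "i \<in> C" "j \<in> C" "C \<subseteq> {1..n}"
        using ij calE_subset[OF D] C by (auto simp: communities_def)
      then have "0 < p n i j" "(rho n C)^2 * p n i j \<le> 1/10"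
        using setting_p_pos[OF set] elim(2) C ij(3) by blast+
      then show "theta (p n) i j (c * p n i j) \<le> 2 * theta (p n) i j (rho n C * p n i j)"
        using theta_le_twice[OF _ setting_rho_gt_1[OF set C]] root(2) c by simp
    qed
  qed
qed

end
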